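(* Let $\Phi(\vec x)=\bigwedge_{i=1}^m f_i\mid g_i$ be a system of divisibility constraints in $d$ variables and let $p$ be a prime with $p\notin\mathbb P(\Phi)$. Then $\Phi$ has a solution $\vec b\in\mathbb N^d$ modulo $p$ such that $v_p(f_i(\vec b))=0$ for every $1\le i\le m$ and $\|\vec b\|_\infty\le p-1$.
   Context: Linear polynomials $f=a_1x_1+\dots+a_dx_d+c$ have integer coefficients. A system of divisibility constraints is $\Phi(\vec x)=\bigwedge_{i=1}^m f_i(\vec x)\mid g_i(\vec x)$ with $m\ge1$ and linear polynomials $f_i\neq 0$, $g_i$. For a prime $p$, $v_p$ is the $p$-adic valuation ($v_p(0)=\infty$); $\vec b\in\mathbb Z^d$ is a solution of $\Phi$ modulo $p$ if $f_i(\vec b)\ne0$ and $v_p(f_i(\vec b))\le v_p(g_i(\vec b))$ for all $i$. $\mathbb P(\Phi)$ is the set of primes $p$ with $p\le m$ or $p$ dividing some coefficient or constant of some left-hand side $f_i$. $\|\vec b\|_\infty$ is the maximum absolute value of the entries of $\vec b$. *)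

theory Defs
  imports "HOL-Computational_Algebra.Primes"
begin

text \<open>A linear polynomial a_1 x_1 + ... + a_d x_d + c with integer coefficients is
  represented by the pair (coefficient list [a_1,...,a_d], constant c).\<close>
type_synonym linpoly = "int list \<times> int"

definition eval_lin :: "linpoly \<Rightarrow> int list \<Rightarrow> int" where
  "eval_lin f b = (\<Sum>i<length (fst f). fst f ! i * b ! i) + snd f"

definition lin_nonzero :: "linpoly \<Rightarrow> bool" where
  "lin_nonzero f \<longleftrightarrow> (\<exists>a\<in>set (fst f). a \<noteq> 0) \<or> snd f \<noteq> 0"

definition is_div_system :: "nat \<Rightarrow> (linpoly \<times> linpoly) list \<Rightarrow> bool" where
  "is_div_system d \<Phi> \<longleftrightarrow> length \<Phi> \<ge> 1 \<and>
     (\<forall>(f, g)\<in>set \<Phi>. length (fst f) = d \<and> length (fst g) = d \<and> lin_nonzero f)"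

text \<open>p-adic valuation comparison with v_p(0) = infinity.\<close>
definition vp_le :: "nat \<Rightarrow> int \<Rightarrow> int \<Rightarrow> bool" where
  "vp_le p x y \<longleftrightarrow> y = 0 \<or> (x \<noteq> 0 \<and> multiplicity (int p) x \<le> multiplicity (int p) y)"

definition solution_mod :: "nat \<Rightarrow> (linpoly \<times> linpoly) list \<Rightarrow> int list \<Rightarrow> bool" where
  "solution_mod p \<Phi> b \<longleftrightarrow>
     (\<forall>(f, g)\<in>set \<Phi>. eval_lin f b \<noteq> 0 \<and> vp_le p (eval_lin f b) (eval_lin g b))"

definition bad_primes :: "(linpoly \<times> linpoly) list \<Rightarrow> nat set" where
  "bad_primes \<Phi> = {p. prime p \<and> (p \<le> length \<Phi> \<or>
     (\<exists>(f, g)\<in>set \<Phi>. (\<exists>a\<in>set (fst f). a \<noteq> 0 \<and> int p dvd a) \<or>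
                        (snd f \<noteq> 0 \<and> int p dvd snd f)))}"

end

theory Submission
  imports Defs
begin

text \<open>Call a linear polynomial nonzero modulo \<open>p\<close> if some coefficient or its constant is not
  divisible by \<open>p\<close>; for \<open>p \<notin> \<P>(\<Phi>)\<close> every \<open>f\<^sub>i\<close> is. Substituting \<open>t\<close> for the first variable
  keeps such a polynomial nonzero modulo \<open>p\<close> unless \<open>t\<close> lies in one bad residue class: if the
  first coefficient \<open>a\<close> is a unit mod \<open>p\<close>, the new constant \<open>c + a t\<close> vanishes mod \<open>p\<close> for only
  one \<open>t\<close>, and otherwise nothing changes modulo \<open>p\<close>. As \<open>m < p\<close>, some \<open>t \<in> {0..p-1}\<close> avoids the
  bad classes of all \<open>f\<^sub>i\<close>. After all \<open>d\<close> variables are substituted, each \<open>f\<^sub>i(b)\<close> is a constant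
  not divisible by \<open>p\<close>, which gives everything claimed.\<close>

definition nonzero_mod :: "nat \<Rightarrow> linpoly \<Rightarrow> bool" where
  "nonzero_mod p f \<longleftrightarrow> (\<exists>a\<in>set (fst f). \<not> int p dvd a) \<or> \<not> int p dvd snd f"

definition subst_first :: "int \<Rightarrow> linpoly \<Rightarrow> linpoly" where
  "subst_first t f = (tl (fst f), snd f + hd (fst f) * t)"

definition degenerate_residues :: "nat \<Rightarrow> linpoly \<Rightarrow> int set" where
  "degenerate_residues p f = {t\<in>{0..<int p}. \<not> nonzero_mod p (subst_first t f)}"

lemma finite_degenerate_residues [simp]: "finite (degenerate_residues p f)"
  unfolding degenerate_residues_def by (rule finite_subset[of _ "{0..<int p}"]) auto

lemma eval_lin_Cons: "eval_lin (a # as, c) (t # b) = eval_lin (as, c + a * t) b"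
  unfolding eval_lin_def by (simp only: fst_conv snd_conv length_Cons sum.lessThan_Suc_shift) simp

lemma eval_lin_subst_first:
  assumes "fst f \<noteq> []"
  shows "eval_lin f (t # b) = eval_lin (subst_first t f) b"
proof -
  obtain a as c where "f = (a # as, c)"
    using assms by (cases f; cases "fst f") auto
  then show ?thesis by (simp add: subst_first_def eval_lin_Cons)
qed

lemma subst_first_degenerate_cong:
  assumes p: "prime p" and "fst f \<noteq> []" and nz: "nonzero_mod p f"
    and t1: "\<not> nonzero_mod p (subst_first t1 f)" and t2: "\<not> nonzero_mod p (subst_first t2 f)"
  shows "int p dvd t1 - t2"
proof -
  obtain a as c where f: "f = (a # as, c)"
    using \<open>fst f \<noteq> []\<close> by (cases f; cases "fst f") auto
  have d1: "int p dvd c + a * t1" and d2: "int p dvd c + a * t2"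
    and das: "\<forall>x\<in>set as. int p dvd x"
    using t1 t2 by (auto simp: nonzero_mod_def subst_first_def f)
  have "\<not> int p dvd a"
  proof
    assume "int p dvd a"
    then have "int p dvd (c + a * t1) - a * t1" by (intro dvd_diff d1 dvd_mult2)
    with \<open>int p dvd a\<close> das nz show False by (auto simp: nonzero_mod_def f)
  qed
  moreover have "int p dvd a * (t1 - t2)"
    using dvd_diff[OF d1 d2] by (simp add: algebra_simps)
  ultimately show ?thesis
    using p by (simp add: prime_dvd_mult_iff)
qed

lemma dvd_diff_in_residues_imp_eq:
  assumes "t1 \<in> {0..<m}" "t2 \<in> {0..<m}" "m dvd t1 - t2"
  shows "t1 = (t2::int)"
  using assms by (metis atLeastLessThan_iff mod_eq_dvd_iff mod_pos_pos_trivial)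

lemma card_degenerate_residues_le_1:
  assumes "prime p" and "fst f \<noteq> []" and "nonzero_mod p f"
  shows "card (degenerate_residues p f) \<le> 1"
proof -
  have "\<forall>t1\<in>degenerate_residues p f. \<forall>t2\<in>degenerate_residues p f. t1 = t2"
    using subst_first_degenerate_cong[OF assms]
    by (auto simp: degenerate_residues_def intro: dvd_diff_in_residues_imp_eq)
  then show ?thesis
    using card_le_Suc0_iff_eq[of "degenerate_residues p f"] by (simp only: One_nat_def) simp
qed

lemma exists_residue_avoiding_degenerate:
  assumes p: "prime p" and "length F < p"
    and F: "\<forall>f\<in>set F. fst f \<noteq> [] \<and> nonzero_mod p f"
  obtains t where "t \<in> {0..<int p}" "\<forall>f\<in>set F. nonzero_mod p (subst_first t f)"
proof -
  let ?B = "\<Union>f\<in>set F. degenerate_residues p f"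
  have "card ?B \<le> (\<Sum>f\<in>set F. card (degenerate_residues p f))"
    by (rule card_UN_le) simp
  also have "\<dots> \<le> (\<Sum>f\<in>set F. 1)"
    using F by (intro sum_mono card_degenerate_residues_le_1[OF p]) auto
  also have "\<dots> \<le> length F" by (simp add: card_length)
  finally have "card ?B < card {0..<int p}" using \<open>length F < p\<close> by simp
  then have "\<not> {0..<int p} \<subseteq> ?B"
    using card_mono[of ?B "{0..<int p}"] by auto
  then obtain t where "t \<in> {0..<int p}" "t \<notin> ?B" by blast
  then show ?thesis
    using that by (auto simp: degenerate_residues_def)
qed

lemma exists_small_point_nonzero_mod:
  assumes p: "prime p"
  shows "length F < p \<Longrightarrow> \<forall>f\<in>set F. length (fst f) = d \<and> nonzero_mod p f \<Longrightarrow>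
    \<exists>b. length b = d \<and> (\<forall>x\<in>set b. 0 \<le> x \<and> x \<le> int p - 1) \<and>
        (\<forall>f\<in>set F. \<not> int p dvd eval_lin f b)"
proof (induction d arbitrary: F)
  case 0
  then show ?case by (auto simp: nonzero_mod_def eval_lin_def)
next
  case (Suc d)
  have "\<forall>f\<in>set F. fst f \<noteq> [] \<and> nonzero_mod p f"
    using Suc.prems(2) by auto
  then obtain t where t: "t \<in> {0..<int p}" "\<forall>f\<in>set F. nonzero_mod p (subst_first t f)"
    using exists_residue_avoiding_degenerate[OF p Suc.prems(1)] by blast
  have "\<forall>g\<in>set (map (subst_first t) F). length (fst g) = d \<and> nonzero_mod p g"
    using Suc.prems(2) t(2) by (auto simp: subst_first_def)
  then obtain b where b: "length b = d" "\<forall>x\<in>set b. 0 \<le> x \<and> x \<le> int p - 1"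
      "\<forall>g\<in>set (map (subst_first t) F). \<not> int p dvd eval_lin g b"
    using Suc.IH Suc.prems(1) by (metis length_map)
  have "eval_lin f (t # b) = eval_lin (subst_first t f) b" if "f \<in> set F" for f
    using that Suc.prems(2) by (intro eval_lin_subst_first) auto
  with b t(1) show ?case
    by (intro exI[of _ "t # b"]) auto
qed

lemma nonzero_mod_if_not_bad_prime:
  assumes "prime p" "p \<notin> bad_primes \<Phi>" "(f, g) \<in> set \<Phi>" "lin_nonzero f"
  shows "nonzero_mod p f"
proof -
  have "\<forall>a\<in>set (fst f). a \<noteq> 0 \<longrightarrow> \<not> int p dvd a" "snd f \<noteq> 0 \<longrightarrow> \<not> int p dvd snd f"
    using assms(1-3) unfolding bad_primes_def by fastforce+
  with assms(4) show ?thesis by (auto simp: lin_nonzero_def nonzero_mod_def)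
qed

theorem mainTheorem8:
  fixes d p :: nat and \<Phi> :: "(linpoly \<times> linpoly) list"
  assumes "is_div_system d \<Phi>"
    and "prime p"
    and "p \<notin> bad_primes \<Phi>"
  shows "\<exists>b :: int list. length b = d \<and> (\<forall>x\<in>set b. 0 \<le> x \<and> x \<le> int p - 1) \<and>
           solution_mod p \<Phi> b \<and>
           (\<forall>(f, g)\<in>set \<Phi>. multiplicity (int p) (eval_lin f b) = 0)"
proof -
  have len: "length (map fst \<Phi>) < p"
    using assms(2,3) by (auto simp: bad_primes_def)
  have nz: "\<forall>f\<in>set (map fst \<Phi>). length (fst f) = d \<and> nonzero_mod p f"
  proof
    fix f assume "f \<in> set (map fst \<Phi>)"
    then obtain g where fg: "(f, g) \<in> set \<Phi>" by auto
    with assms(1) have "length (fst f) = d" "lin_nonzero f"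
      by (auto simp: is_div_system_def)
    with fg assms(2,3) show "length (fst f) = d \<and> nonzero_mod p f"
      by (simp add: nonzero_mod_if_not_bad_prime)
  qed
  obtain b where b: "length b = d" "\<forall>x\<in>set b. 0 \<le> x \<and> x \<le> int p - 1"
      "\<forall>f\<in>set (map fst \<Phi>). \<not> int p dvd eval_lin f b"
    using exists_small_point_nonzero_mod[OF assms(2) len nz] by blast
  have "eval_lin f b \<noteq> 0" "multiplicity (int p) (eval_lin f b) = 0" if "(f, g) \<in> set \<Phi>" for f g
    using b(3) that by (force, force intro: not_dvd_imp_multiplicity_0)
  with b(1,2) show ?thesis
    by (intro exI[of _ b]) (auto simp: solution_mod_def vp_le_def)
qed

end
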